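(* The following single-statistic generating functions hold over $S_n(123,132)$: $$\sum_{n\ge0}\sum_{\pi\in S_n(123,132)}x^nu^{\operatorname{lrmax}(\pi)}=\frac{1-2x+ux-ux^2+u^2x^2}{1-2x},\qquad \sum_{n\ge0}\sum_{\pi\in S_n(123,132)}x^nv^{\operatorname{rlmax}(\pi)}=\frac{1-x}{1-x-vx},$$ $$\sum_{n\ge0}\sum_{\pi\in S_n(123,132)}x^ns^{\operatorname{lrmin}(\pi)}=\frac{1-sx}{1-2sx-sx^2+s^2x^2},\qquad \sum_{n\ge0}\sum_{\pi\in S_n(123,132)}x^nt^{\operatorname{rlmin}(\pi)}=\frac{1-2x+tx-tx^2+t^2x^2}{1-2x}.$$
   Context: For $n\ge 0$, $S_n$ denotes the set of permutations $\pi=\pi_1\cdots\pi_n$ of $[n]=\{1,\dots,n\}$ ($S_0$ consists of the empty permutation, for which all statistics are $0$). $S_n(123,132)$ is the set of $\pi\in S_n$ containing no subsequence order-isomorphic to $123$ or to $132$. $\pi_i$ is a left-to-right maximum (resp. minimum) if it is larger (resp. smaller) than every $\pi_j$ with $j<i$, and a right-to-left maximum (resp. minimum) if it is larger (resp. smaller) than every $\pi_j$ with $j>i$; $\operatorname{lrmax},\operatorname{lrmin},\operatorname{rlmax},\operatorname{rlmin}$ count these. *)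

theory Defs
  imports "HOL-Combinatorics.Multiset_Permutations" "HOL-Computational_Algebra.Formal_Power_Series"
begin

(* Permutations of [n] in one-line notation: lists pi_1 ... pi_n *)
definition Sn :: "nat \<Rightarrow> nat list set" where
  "Sn n = permutations_of_set {1..n}"

definition contains :: "nat list \<Rightarrow> nat list \<Rightarrow> bool" where
  "contains p w \<longleftrightarrow> (\<exists>f. strict_mono_on {0..<length p} f
       \<and> (\<forall>a<length p. f a < length w)
       \<and> (\<forall>a<length p. \<forall>b<length p. p ! a < p ! b \<longleftrightarrow> w ! (f a) < w ! (f b)))"

definition Sn_av :: "nat \<Rightarrow> nat list set" where
  "Sn_av n = {w \<in> Sn n. \<not> contains [1,2,3] w \<and> \<not> contains [1,3,2] w}"

definition lrmax :: "nat list \<Rightarrow> nat" where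
  "lrmax w = card {i. i < length w \<and> (\<forall>j<i. w ! j < w ! i)}"
definition lrmin :: "nat list \<Rightarrow> nat" where
  "lrmin w = card {i. i < length w \<and> (\<forall>j<i. w ! i < w ! j)}"
definition rlmax :: "nat list \<Rightarrow> nat" where
  "rlmax w = card {i. i < length w \<and> (\<forall>j. i < j \<and> j < length w \<longrightarrow> w ! j < w ! i)}"
definition rlmin :: "nat list \<Rightarrow> nat" where
  "rlmin w = card {i. i < length w \<and> (\<forall>j. i < j \<and> j < length w \<longrightarrow> w ! i < w ! j)}"

definition gf :: "(nat list \<Rightarrow> nat) \<Rightarrow> 'a::comm_ring_1 \<Rightarrow> 'a fps" where
  "gf stat c = Abs_fps (\<lambda>n. \<Sum>w\<in>Sn_av n. c ^ stat w)"

end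

theory Submission
  imports Defs
begin

text \<open>A permutation avoids 123 and 132 iff no entry is followed by two larger entries. Hence for
  \<open>m \<ge> 1\<close> a permutation of \<open>[m+1]\<close> in the class starts with \<open>m+1\<close> or with \<open>m\<close>, and deleting the
  first entry (in the second case also renaming \<open>m+1\<close> to \<open>m\<close>) maps the class of size \<open>m+1\<close>
  bijectively onto two copies of the class of size \<open>m\<close>. Along this decomposition lrmax takes the
  values 1 and 2, rlmax grows by one or is kept, rlmin is kept (for \<open>m \<ge> 2\<close>), and lrmin grows by
  one in the first copy and in the second copy unless the shorter permutation starts with \<open>m\<close>.
  This gives linear recurrences of order at most two for the coefficients from index 3 on, and
  hence the rational generating functions.\<close>

unbundle fps_syntax

section \<open>Avoiding 123 and 132\<close>

definition no_two_larger_after :: "nat list \<Rightarrow> bool" where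
  "no_two_larger_after w \<longleftrightarrow>
     (\<forall>i j k. i < j \<longrightarrow> j < k \<longrightarrow> k < length w \<longrightarrow> \<not> (w!i < w!j \<and> w!i < w!k))"

lemma contains_imp_not_no_two_larger_after:
  assumes "contains p w" "length p = 3" "p!0 < p!1" "p!0 < p!2"
  shows "\<not> no_two_larger_after w"
proof -
  obtain f where "strict_mono_on {0..<3} f" "\<forall>a<3. f a < length w"
    and "\<forall>a<3. \<forall>b<3. p!a < p!b \<longleftrightarrow> w!(f a) < w!(f b)"
    using assms(1,2) unfolding contains_def by auto
  then have "f 0 < f 1" "f 1 < f 2" "f 2 < length w" "w!(f 0) < w!(f 1)" "w!(f 0) < w!(f 2)"
    using assms(3,4) by (auto simp: strict_mono_on_def)
  then show ?thesis unfolding no_two_larger_after_def by blast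
qed

lemma contains_of_indices:
  assumes "i < j" "j < k" "k < length w" "length p = 3"
    and "\<forall>a<3. \<forall>b<3. p!a < p!b \<longleftrightarrow> w!([i,j,k]!a) < w!([i,j,k]!b)"
  shows "contains p w"
  unfolding contains_def
proof (intro exI[of _ "(!) [i,j,k]"] conjI)
  show "strict_mono_on {0..<length p} ((!) [i,j,k])"
    using assms(1,2,4) by (auto simp: strict_mono_on_def less_Suc_eq numeral_3_eq_3)
qed (use assms in \<open>auto simp: less_Suc_eq numeral_3_eq_3\<close>)

lemma not_no_two_larger_after_imp_contains:
  assumes "\<not> no_two_larger_after w" "distinct w"
  shows "contains [1,2,3] w \<or> contains [1,3,2] w"
proof -
  obtain i j k where ijk: "i < j" "j < k" "k < length w" "w!i < w!j" "w!i < w!k"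
    using assms(1) unfolding no_two_larger_after_def by blast
  have "w!j \<noteq> w!k"
    using ijk assms(2) by (simp add: nth_eq_iff_index_eq)
  then consider "w!j < w!k" | "w!k < w!j" by linarith
  then show ?thesis
  proof cases
    case 1
    have "contains [1,2,3] w"
      by (rule contains_of_indices[OF ijk(1-3)])
        (use ijk 1 in \<open>auto simp: All_less_Suc numeral_3_eq_3\<close>)
    then show ?thesis ..
  next
    case 2
    have "contains [1,3,2] w"
      by (rule contains_of_indices[OF ijk(1-3)])
        (use ijk 2 in \<open>auto simp: All_less_Suc numeral_3_eq_3\<close>)
    then show ?thesis ..
  qed
qed

lemma Sn_av_iff: "w \<in> Sn_av n \<longleftrightarrow> distinct w \<and> set w = {1..n} \<and> no_two_larger_after w"
proof -
  have "\<not> contains [1,2,3] w \<and> \<not> contains [1,3,2] w \<longleftrightarrow> no_two_larger_after w" if "distinct w"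
    using contains_imp_not_no_two_larger_after[of "[1,2,3]" w]
      contains_imp_not_no_two_larger_after[of "[1,3,2]" w]
      not_no_two_larger_after_imp_contains[OF _ that] by auto
  then show ?thesis unfolding Sn_av_def Sn_def permutations_of_set_def by auto
qed

lemma no_two_larger_after_Cons:
  "no_two_larger_after (x # w) \<longleftrightarrow>
     no_two_larger_after w \<and> (\<forall>j k. j < k \<longrightarrow> k < length w \<longrightarrow> \<not> (x < w!j \<and> x < w!k))"
  (is "?lhs \<longleftrightarrow> ?rhs")
proof
  assume ?lhs
  note H = this[unfolded no_two_larger_after_def, rule_format]
  show ?rhs
    using H[of "Suc _" "Suc _" "Suc _"] H[of 0 "Suc _" "Suc _"]
    by (auto simp: no_two_larger_after_def)
next
  assume ?rhs
  show ?lhs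
    unfolding no_two_larger_after_def
  proof (intro allI impI)
    fix i j k assume "i < j" "j < k" "k < length (x # w)"
    moreover obtain j' k' where "j = Suc j'" "k = Suc k'"
      using \<open>i < j\<close> \<open>j < k\<close> by (metis less_imp_Suc_add)
    ultimately show "\<not> ((x # w)!i < (x # w)!j \<and> (x # w)!i < (x # w)!k)"
      using \<open>?rhs\<close> by (cases i) (auto simp: no_two_larger_after_def)
  qed
qed

lemma no_two_larger_after_Cons_distinct:
  assumes "distinct w"
  shows "no_two_larger_after (x # w) \<longleftrightarrow>
           no_two_larger_after w \<and> (\<forall>a\<in>set w. \<forall>b\<in>set w. x < a \<longrightarrow> x < b \<longrightarrow> a = b)"
proof -
  have "(\<forall>j k. j < k \<longrightarrow> k < n \<longrightarrow> \<not> (P j \<and> P k)) \<longleftrightarrow> (\<forall>j<n. \<forall>k<n. P j \<longrightarrow> P k \<longrightarrow> j = k)"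
    for n and P :: "nat \<Rightarrow> bool"
    by (blast elim: linorder_neqE_nat intro: less_trans)
  then have "(\<forall>j k. j < k \<longrightarrow> k < length w \<longrightarrow> \<not> (x < w!j \<and> x < w!k)) \<longleftrightarrow>
        (\<forall>j<length w. \<forall>k<length w. x < w!j \<longrightarrow> x < w!k \<longrightarrow> w!j = w!k)"
    using nth_eq_iff_index_eq[OF assms] by simp
  also have "\<dots> \<longleftrightarrow> (\<forall>a\<in>set w. \<forall>b\<in>set w. x < a \<longrightarrow> x < b \<longrightarrow> a = b)"
    by (fastforce simp: in_set_conv_nth)
  finally show ?thesis
    by (simp add: no_two_larger_after_Cons)
qed

lemma no_two_larger_after_map:
  "strict_mono_on (set w) g \<Longrightarrow> no_two_larger_after (map g w) \<longleftrightarrow> no_two_larger_after w"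
  by (auto simp: no_two_larger_after_def strict_mono_on_less nth_mem)

section \<open>Decomposition by the first entry\<close>

abbreviation swap_Suc :: "nat \<Rightarrow> nat \<Rightarrow> nat" where
  "swap_Suc m \<equiv> Transposition.transpose m (Suc m)"

lemma strict_mono_on_swap_Suc:
  "m \<notin> A \<or> Suc m \<notin> A \<Longrightarrow> strict_mono_on A (swap_Suc m)"
  by (auto simp: strict_mono_on_def transpose_def)

lemma swap_Suc_image:
  "1 \<le> m \<Longrightarrow> swap_Suc m ` {1..m} = {1..Suc m} - {m}"
  by (auto simp: in_transpose_image_iff transpose_def)

lemma finite_Sn_av: "finite (Sn_av n)"
  unfolding Sn_av_def Sn_def using finite_permutations_of_set by (rule finite_subset[rotated]) auto

lemma Sn_av_0: "Sn_av 0 = {[]}"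
  by (auto simp: Sn_av_iff no_two_larger_after_def)

lemma Cons_Suc_in_Sn_av_iff: "Suc m # w \<in> Sn_av (Suc m) \<longleftrightarrow> w \<in> Sn_av m"
proof -
  have "Suc m \<in> {1..Suc m}"
    by simp
  then have "Suc m \<notin> set w \<and> insert (Suc m) (set w) = {1..Suc m} \<longleftrightarrow> set w = {1..Suc m} - {Suc m}"
    by blast
  also have "{1..Suc m} - {Suc m} = {1..m}"
    by auto
  finally have set_iff: "Suc m \<notin> set w \<and> insert (Suc m) (set w) = {1..Suc m} \<longleftrightarrow> set w = {1..m}" .
  show ?thesis
  proof
    assume "Suc m # w \<in> Sn_av (Suc m)"
    then show "w \<in> Sn_av m"
      using set_iff by (simp add: Sn_av_iff no_two_larger_after_Cons)
  next
    assume w: "w \<in> Sn_av m"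
    then have "no_two_larger_after (Suc m # w)"
      by (auto simp: Sn_av_iff no_two_larger_after_Cons_distinct)
    then show "Suc m # w \<in> Sn_av (Suc m)"
      using w set_iff by (simp add: Sn_av_iff)
  qed
qed

lemma Sn_av_1: "Sn_av 1 = {[1]}"
proof -
  have "w = [1]" if w: "w \<in> Sn_av 1" for w
  proof -
    have "set w = {1}"
      using w by (simp add: Sn_av_iff)
    then obtain w' where "w = 1 # w'"
      by (cases w) auto
    moreover have "w' \<in> Sn_av 0"
      using w \<open>w = 1 # w'\<close> Cons_Suc_in_Sn_av_iff[of 0 w'] by simp
    ultimately show ?thesis
      by (simp add: Sn_av_0)
  qed
  moreover have "[1] \<in> Sn_av 1"
    using Cons_Suc_in_Sn_av_iff[of 0 "[]"] by (simp add: Sn_av_0)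
  ultimately show ?thesis
    by blast
qed

lemma Cons_swap_Suc_in_Sn_av_iff:
  assumes "1 \<le> m"
  shows "m # map (swap_Suc m) w \<in> Sn_av (Suc m) \<longleftrightarrow> w \<in> Sn_av m"
proof -
  let ?\<tau> = "swap_Suc m" and ?w = "map (swap_Suc m) w"
  have "m \<in> {1..Suc m}"
    using assms by simp
  then have "m \<notin> set ?w \<and> insert m (set ?w) = {1..Suc m} \<longleftrightarrow> set ?w = {1..Suc m} - {m}"
    by blast
  also have "\<dots> \<longleftrightarrow> set w = {1..m}"
    unfolding swap_Suc_image[OF assms, symmetric] set_map by (simp add: inj_image_eq_iff)
  finally have set_iff: "m \<notin> set ?w \<and> insert m (set ?w) = {1..Suc m} \<longleftrightarrow> set w = {1..m}" .
  have mono: "strict_mono_on {1..m} ?\<tau>"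
    by (rule strict_mono_on_swap_Suc) simp
  show ?thesis
  proof
    assume "m # ?w \<in> Sn_av (Suc m)"
    then have "distinct w" "set w = {1..m}" "no_two_larger_after ?w"
      using set_iff by (auto simp: Sn_av_iff no_two_larger_after_Cons distinct_map)
    then show "w \<in> Sn_av m"
      using mono by (simp add: Sn_av_iff no_two_larger_after_map)
  next
    assume "w \<in> Sn_av m"
    then have w: "distinct ?w" "set w = {1..m}" "no_two_larger_after ?w"
      using mono by (simp_all add: Sn_av_iff no_two_larger_after_map distinct_map)
    moreover have "\<forall>y\<in>set ?w. m < y \<longrightarrow> y = Suc m"
      using w(2) by (auto simp: transpose_def)
    ultimately have "no_two_larger_after (m # ?w)"
      by (simp add: no_two_larger_after_Cons_distinct del: set_map) metis
    then show "m # ?w \<in> Sn_av (Suc m)"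
      using w set_iff by (simp add: Sn_av_iff)
  qed
qed

lemma Sn_av_Suc:
  assumes "1 \<le> m"
  shows "Sn_av (Suc m) = Cons (Suc m) ` Sn_av m
           \<union> (\<lambda>w. m # map (swap_Suc m) w) ` Sn_av m"
    (is "_ = ?A \<union> ?B")
proof (intro equalityI subsetI)
  fix w assume w: "w \<in> Sn_av (Suc m)"
  then have dw: "distinct w" "set w = {1..Suc m}" "no_two_larger_after w"
    by (simp_all add: Sn_av_iff)
  then obtain x w' where xw: "w = x # w'"
    by (cases w) auto
  have "x = Suc m \<or> x = m"
  proof (rule ccontr)
    assume x: "\<not> (x = Suc m \<or> x = m)"
    have "x \<in> set w"
      using xw by simp
    then have "x < m"
      using x dw(2) by auto
    moreover have "m \<in> set w'" "Suc m \<in> set w'"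
      using x dw(2) assms xw by auto
    moreover have "\<forall>a\<in>set w'. \<forall>b\<in>set w'. x < a \<longrightarrow> x < b \<longrightarrow> a = b"
      using dw(1,3) no_two_larger_after_Cons_distinct[of w' x] xw by simp
    ultimately show False
      by (metis less_SucI n_not_Suc_n)
  qed
  then show "w \<in> ?A \<union> ?B"
  proof
    assume "x = Suc m"
    then show ?thesis
      using w Cons_Suc_in_Sn_av_iff unfolding xw by blast
  next
    let ?\<tau> = "swap_Suc m"
    assume "x = m"
    then have "w = m # map ?\<tau> (map ?\<tau> w')" and "map ?\<tau> w' \<in> Sn_av m"
      using w Cons_swap_Suc_in_Sn_av_iff[OF assms, of "map ?\<tau> w'"] unfolding xw
      by (simp_all add: comp_def)
    then show ?thesis
      by blast
  qed
next
  fix w assume "w \<in> ?A \<union> ?B"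
  then show "w \<in> Sn_av (Suc m)"
    using Cons_Suc_in_Sn_av_iff Cons_swap_Suc_in_Sn_av_iff[OF assms] by blast
qed

lemma sum_Sn_av_Suc:
  assumes "1 \<le> m"
  shows "(\<Sum>w\<in>Sn_av (Suc m). f w) =
           (\<Sum>w\<in>Sn_av m. f (Suc m # w))
         + (\<Sum>w\<in>Sn_av m. f (m # map (swap_Suc m) w))"
proof -
  have "inj_on (\<lambda>w. m # map (swap_Suc m) w) (Sn_av m)"
    by (auto simp: inj_on_def dest: map_injective[OF _ inj_transpose])
  then show ?thesis
    unfolding Sn_av_Suc[OF assms]
    by (subst sum.union_disjoint) (auto simp: finite_Sn_av sum.reindex)
qed

lemma card_Sn_av_Suc: "1 \<le> m \<Longrightarrow> card (Sn_av (Suc m)) = 2 * card (Sn_av m)"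
  using sum_Sn_av_Suc[of m "\<lambda>_. 1 :: nat"] by simp

section \<open>The four statistics\<close>

lemma lrmin_map: "strict_mono_on (set w) g \<Longrightarrow> lrmin (map g w) = lrmin w"
  unfolding lrmin_def by (rule arg_cong[where f = card]) (auto simp: strict_mono_on_less nth_mem)

lemma rlmax_map: "strict_mono_on (set w) g \<Longrightarrow> rlmax (map g w) = rlmax w"
  unfolding rlmax_def by (rule arg_cong[where f = card]) (auto simp: strict_mono_on_less nth_mem)

lemma rlmin_map: "strict_mono_on (set w) g \<Longrightarrow> rlmin (map g w) = rlmin w"
  unfolding rlmin_def by (rule arg_cong[where f = card]) (auto simp: strict_mono_on_less nth_mem)

lemma card_less_Suc_split:
  "card {i. i < Suc n \<and> P i} = (if P 0 then 1 else 0) + card {i. i < n \<and> P (Suc i)}"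
proof -
  have "{i. i < Suc n \<and> P i} = (if P 0 then {0} else {}) \<union> Suc ` {i. i < n \<and> P (Suc i)}"
    by (auto simp: image_iff less_Suc_eq_0_disj)
  moreover have "card (Suc ` {i. i < n \<and> P (Suc i)}) = card {i. i < n \<and> P (Suc i)}"
    by (simp add: card_image)
  ultimately show ?thesis
    by (simp add: card_Un_disjoint)
qed

lemma lrmax_Cons: "lrmax (x # w) = Suc (card {i. i < length w \<and> x < w!i \<and> (\<forall>j<i. w!j < w!i)})"
  unfolding lrmax_def by (simp only: length_Cons card_less_Suc_split) (simp add: All_less_Suc2)

lemma lrmin_Cons: "lrmin (x # w) = Suc (card {i. i < length w \<and> w!i < x \<and> (\<forall>j<i. w!i < w!j)})"
  unfolding lrmin_def by (simp only: length_Cons card_less_Suc_split) (simp add: All_less_Suc2)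

lemma all_between_Suc_iff:
  "(\<forall>j. Suc i < j \<and> j < Suc n \<longrightarrow> Q j) \<longleftrightarrow> (\<forall>j. i < j \<and> j < n \<longrightarrow> Q (Suc j))"
  by (metis Suc_less_eq Suc_lessE)

lemma all_positive_less_Suc_iff: "(\<forall>j. 0 < j \<and> j < Suc n \<longrightarrow> Q j) \<longleftrightarrow> (\<forall>j<n. Q (Suc j))"
  by (auto simp: gr0_conv_Suc)

lemma rlmax_Cons: "rlmax (x # w) = (if \<forall>y\<in>set w. y < x then 1 else 0) + rlmax w"
  unfolding rlmax_def length_Cons card_less_Suc_split all_between_Suc_iff all_positive_less_Suc_iff
  by (simp add: all_set_conv_all_nth)

lemma rlmin_Cons: "rlmin (x # w) = (if \<forall>y\<in>set w. x < y then 1 else 0) + rlmin w"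
  unfolding rlmin_def length_Cons card_less_Suc_split all_between_Suc_iff all_positive_less_Suc_iff
  by (simp add: all_set_conv_all_nth)

lemma stats_Nil: "lrmax [] = 0" "lrmin [] = 0" "rlmax [] = 0" "rlmin [] = 0"
  by (simp_all add: lrmax_def lrmin_def rlmax_def rlmin_def)

lemma stats_singleton: "lrmax [x] = 1" "lrmin [x] = 1" "rlmax [x] = 1" "rlmin [x] = 1"
  by (simp_all add: lrmax_Cons lrmin_Cons rlmax_Cons rlmin_Cons stats_Nil)

lemma lrmax_Cons_greatest: "\<forall>y\<in>set w. y < x \<Longrightarrow> lrmax (x # w) = 1"
  by (auto simp: lrmax_Cons all_set_conv_all_nth)

lemma lrmin_Cons_greatest:
  assumes "\<forall>y\<in>set w. y < x"
  shows "lrmin (x # w) = Suc (lrmin w)"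
proof -
  have "{i. i < length w \<and> w!i < x \<and> (\<forall>j<i. w!i < w!j)} = {i. i < length w \<and> (\<forall>j<i. w!i < w!j)}"
    using assms by (auto simp: all_set_conv_all_nth)
  then show ?thesis
    by (simp add: lrmin_Cons lrmin_def[of w])
qed

lemma lrmax_Cons_one_larger:
  assumes "p < length w" "x < w!p" "\<forall>i<length w. i \<noteq> p \<longrightarrow> w!i < x"
  shows "lrmax (x # w) = 2"
proof -
  have "{i. i < length w \<and> x < w!i \<and> (\<forall>j<i. w!j < w!i)} = {p}"
    using assms by (auto intro: less_trans)
  then show ?thesis
    by (simp add: lrmax_Cons)
qed

lemma lrmin_Cons_one_larger:
  assumes "p < length w" "x < w!p" "\<forall>i<length w. i \<noteq> p \<longrightarrow> w!i < x"
  shows "lrmin (x # w) = (if p = 0 then lrmin w else Suc (lrmin w))"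
proof -
  let ?L = "{i. i < length w \<and> (\<forall>j<i. w!i < w!j)}"
  have "lrmin (x # w) = Suc (card (?L - {p}))"
  proof -
    have "{i. i < length w \<and> w!i < x \<and> (\<forall>j<i. w!i < w!j)} = ?L - {p}"
      using assms by auto
    then show ?thesis
      by (simp add: lrmin_Cons)
  qed
  moreover have "0 \<in> ?L"
    using assms(1) by auto
  moreover have "p \<notin> ?L" if "p \<noteq> 0"
  proof
    assume "p \<in> ?L"
    then have "w!p < w!0"
      using that by blast
    moreover have "w!0 < x"
      using assms(1,3) that by fastforce
    ultimately show False
      using assms(2) by simp
  qed
  ultimately show ?thesis
    using card_Suc_Diff1[of ?L 0] by (simp add: lrmin_def[of w])
qed

lemma Sn_av_swap_Suc_unique_larger:
  assumes "w \<in> Sn_av m" "1 \<le> m"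
  obtains p where "p < length w" "m < map (swap_Suc m) w ! p"
    and "\<forall>i<length w. i \<noteq> p \<longrightarrow> map (swap_Suc m) w ! i < m"
    and "hd w = m \<longleftrightarrow> p = 0"
proof -
  have w: "distinct w" "set w = {1..m}"
    using assms(1) by (simp_all add: Sn_av_iff)
  then obtain p where p: "p < length w" "w!p = m"
    using assms(2) by (metis atLeastAtMost_iff in_set_conv_nth order_refl)
  have less: "w!i < m" if "i < length w" "i \<noteq> p" for i
    using w nth_mem[OF that(1)] nth_eq_iff_index_eq[OF w(1) that(1) p(1)] p(2) that(2) by fastforce
  have "map (swap_Suc m) w ! i < m" if "i < length w" "i \<noteq> p" for i
    using less[OF that] that(1) by (simp add: transpose_def)
  moreover have "m < map (swap_Suc m) w ! p"
    using p by simp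
  moreover have "w \<noteq> []"
    using p(1) by (cases w) auto
  then have "hd w = m \<longleftrightarrow> p = 0"
    using p nth_eq_iff_index_eq[OF w(1), of 0 p] by (auto simp: hd_conv_nth)
  ultimately show ?thesis
    using p(1) that by blast
qed

lemma strict_mono_on_Sn_av_swap_Suc:
  "w \<in> Sn_av m \<Longrightarrow> strict_mono_on (set w) (swap_Suc m)"
  by (rule strict_mono_on_swap_Suc) (simp add: Sn_av_iff)

lemma lrmax_Cons_Suc: "w \<in> Sn_av m \<Longrightarrow> lrmax (Suc m # w) = 1"
  by (rule lrmax_Cons_greatest) (auto simp: Sn_av_iff)

lemma lrmin_Cons_Suc: "w \<in> Sn_av m \<Longrightarrow> lrmin (Suc m # w) = Suc (lrmin w)"
  by (rule lrmin_Cons_greatest) (auto simp: Sn_av_iff)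

lemma rlmax_Cons_Suc: "w \<in> Sn_av m \<Longrightarrow> rlmax (Suc m # w) = Suc (rlmax w)"
  by (auto simp: rlmax_Cons Sn_av_iff)

lemma rlmin_Cons_Suc: "w \<in> Sn_av m \<Longrightarrow> 1 \<le> m \<Longrightarrow> rlmin (Suc m # w) = rlmin w"
  by (auto simp: rlmin_Cons Sn_av_iff)

lemma lrmax_Cons_swap_Suc:
  "w \<in> Sn_av m \<Longrightarrow> 1 \<le> m \<Longrightarrow> lrmax (m # map (swap_Suc m) w) = 2"
  by (erule Sn_av_swap_Suc_unique_larger) (auto intro: lrmax_Cons_one_larger)

lemma lrmin_Cons_swap_Suc:
  assumes "w \<in> Sn_av m" "1 \<le> m"
  shows "lrmin (m # map (swap_Suc m) w) = (if hd w = m then lrmin w else Suc (lrmin w))"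
proof -
  obtain p where "p < length w" "m < map (swap_Suc m) w ! p"
    "\<forall>i<length w. i \<noteq> p \<longrightarrow> map (swap_Suc m) w ! i < m"
    and "hd w = m \<longleftrightarrow> p = 0"
    using assms by (rule Sn_av_swap_Suc_unique_larger)
  then show ?thesis
    using lrmin_Cons_one_larger[of p "map (swap_Suc m) w" m]
      lrmin_map[OF strict_mono_on_Sn_av_swap_Suc[OF assms(1)]] by simp
qed

lemma rlmax_Cons_swap_Suc:
  assumes "w \<in> Sn_av m" "1 \<le> m"
  shows "rlmax (m # map (swap_Suc m) w) = rlmax w"
proof -
  obtain p where "p < length w" "m < map (swap_Suc m) w ! p"
    using assms by (rule Sn_av_swap_Suc_unique_larger)
  then have "\<not> (\<forall>y\<in>set (map (swap_Suc m) w). y < m)"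
    by (metis length_map not_less_iff_gr_or_eq nth_mem)
  then show ?thesis
    using rlmax_map[OF strict_mono_on_Sn_av_swap_Suc[OF assms(1)]] by (simp add: rlmax_Cons)
qed

lemma rlmin_Cons_swap_Suc:
  assumes "w \<in> Sn_av m" "2 \<le> m"
  shows "rlmin (m # map (swap_Suc m) w) = rlmin w"
proof -
  have "1 \<in> set w" "swap_Suc m 1 = 1"
    using assms by (simp_all add: Sn_av_iff)
  then have "1 \<in> set (map (swap_Suc m) w)"
    by (metis image_eqI set_map)
  moreover have "\<not> m < 1"
    using assms(2) by simp
  ultimately have "\<not> (\<forall>y\<in>set (map (swap_Suc m) w). m < y)"
    by blast
  then show ?thesis
    using rlmin_map[OF strict_mono_on_Sn_av_swap_Suc[OF assms(1)]] by (simp add: rlmin_Cons)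
qed

section \<open>Generating functions\<close>

lemma gf_nth: "gf stat c $ n = (\<Sum>w\<in>Sn_av n. c ^ stat w)"
  by (simp add: gf_def)

lemma gf_nth_0: "stat [] = 0 \<Longrightarrow> gf stat c $ 0 = 1"
  by (simp add: gf_nth Sn_av_0)

lemma gf_nth_1: "stat [1] = 1 \<Longrightarrow> gf stat c $ 1 = c"
  unfolding gf_nth Sn_av_1 by simp

lemma gf_lrmax_nth_Suc:
  "1 \<le> m \<Longrightarrow> gf lrmax u $ Suc m = of_nat (card (Sn_av m)) * (u + u^2)"
  by (simp add: gf_nth sum_Sn_av_Suc lrmax_Cons_Suc lrmax_Cons_swap_Suc sum.distrib algebra_simps
      cong: sum.cong)

lemma gf_rlmax_nth_Suc: "1 \<le> m \<Longrightarrow> gf rlmax v $ Suc m = (1 + v) * gf rlmax v $ m"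
  by (simp add: gf_nth sum_Sn_av_Suc rlmax_Cons_Suc rlmax_Cons_swap_Suc sum.distrib
      sum_distrib_left algebra_simps cong: sum.cong)

lemma gf_rlmin_nth_Suc: "2 \<le> m \<Longrightarrow> gf rlmin t $ Suc m = 2 * gf rlmin t $ m"
  by (simp add: gf_nth sum_Sn_av_Suc rlmin_Cons_Suc rlmin_Cons_swap_Suc cong: sum.cong)

lemma gf_rlmin_nth_2: "gf rlmin t $ 2 = t + t^2"
proof -
  have "gf rlmin t $ Suc 1 = t ^ rlmin [Suc 1, 1] + t ^ rlmin [1, Suc 1]"
    unfolding gf_nth sum_Sn_av_Suc[OF order_refl] Sn_av_1 by simp
  then show ?thesis
    by (simp add: rlmin_Cons stats_Nil power2_eq_square numeral_2_eq_2)
qed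

lemma fps_eq_divide_of_recurrence:
  fixes F :: "'a::field fps"
  assumes rec: "\<And>n. F $ (n + 3) = a * F $ (n + 2) + b * F $ (n + 1)"
  shows "F = (fps_const (F $ 0) + fps_const (F $ 1 - a * F $ 0) * fps_X
              + fps_const (F $ 2 - a * F $ 1 - b * F $ 0) * fps_X^2)
             / (1 - fps_const a * fps_X - fps_const b * fps_X^2)"
proof -
  let ?P = "fps_const (F $ 0) + fps_const (F $ 1 - a * F $ 0) * fps_X
              + fps_const (F $ 2 - a * F $ 1 - b * F $ 0) * fps_X^2"
  let ?Q = "1 - fps_const a * fps_X - fps_const b * fps_X^2 :: 'a fps"
  have "F * ?Q = F - fps_const a * (fps_X * F) - fps_const b * (fps_X^2 * F)"
    by (simp add: algebra_simps)
  also have "\<dots> = ?P"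
  proof (rule fps_ext)
    fix n :: nat
    consider "n = 0" | "n = 1" | "n = 2" | k where "n = k + 3"
      by (metis One_nat_def Suc_1 add.commute add_Suc_right numeral_3_eq_3 not0_implies_Suc add_0)
    then show "(F - fps_const a * (fps_X * F) - fps_const b * (fps_X^2 * F)) $ n = ?P $ n"
      by cases (simp_all add: fps_X_power_mult_nth rec)
  qed
  finally have "F * ?Q = ?P" .
  moreover have "?Q $ 0 = 1"
    by simp
  then have "?Q \<noteq> 0"
    by (metis fps_zero_nth one_neq_zero)
  ultimately show ?thesis
    by (metis nonzero_mult_div_cancel_right)
qed

lemma gf_lrmax:
  fixes u :: "'a::field"
  shows "gf lrmax u = (1 - 2 * fps_X + fps_const u * fps_X - fps_const u * fps_X ^ 2
                         + fps_const (u ^ 2) * fps_X ^ 2) / (1 - 2 * fps_X)"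
proof -
  have rec: "gf lrmax u $ (n + 3) = 2 * gf lrmax u $ (n + 2) + 0 * gf lrmax u $ (n + 1)" for n
    using gf_lrmax_nth_Suc[of "n + 2" u] gf_lrmax_nth_Suc[of "n + 1" u] card_Sn_av_Suc[of "n + 1"]
    by (simp add: eval_nat_numeral)
  have "card (Sn_av 1) = 1"
    unfolding Sn_av_1 by simp
  then have coeffs: "gf lrmax u $ 0 = 1" "gf lrmax u $ 1 = u" "gf lrmax u $ 2 = u + u^2"
    using gf_lrmax_nth_Suc[of 1 u] gf_nth_1[of lrmax u]
    by (simp_all add: gf_nth_0 stats_Nil stats_singleton numeral_2_eq_2)
  show ?thesis
    by (subst fps_eq_divide_of_recurrence[OF rec])
      (use coeffs in \<open>simp add: algebra_simps
        flip: fps_const_add fps_const_sub fps_const_neg fps_const_mult fps_const_power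
          fps_numeral_fps_const\<close>)
qed

lemma gf_rlmax:
  fixes v :: "'a::field"
  shows "gf rlmax v = (1 - fps_X) / (1 - fps_X - fps_const v * fps_X)"
proof -
  have rec: "gf rlmax v $ (n + 3) = (1 + v) * gf rlmax v $ (n + 2) + 0 * gf rlmax v $ (n + 1)" for n
    using gf_rlmax_nth_Suc[of "n + 2" v] by (simp add: eval_nat_numeral)
  have coeffs: "gf rlmax v $ 0 = 1" "gf rlmax v $ 1 = v" "gf rlmax v $ 2 = (1 + v) * v"
    using gf_rlmax_nth_Suc[of 1 v] gf_nth_1[of rlmax v]
    by (simp_all add: gf_nth_0 stats_Nil stats_singleton numeral_2_eq_2)
  show ?thesis
    by (subst fps_eq_divide_of_recurrence[OF rec])
      (use coeffs in \<open>simp add: algebra_simps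
        flip: fps_const_add fps_const_sub fps_const_neg fps_const_mult fps_const_power
          fps_numeral_fps_const\<close>)
qed

lemma gf_rlmin:
  fixes t :: "'a::field"
  shows "gf rlmin t = (1 - 2 * fps_X + fps_const t * fps_X - fps_const t * fps_X ^ 2
                         + fps_const (t ^ 2) * fps_X ^ 2) / (1 - 2 * fps_X)"
proof -
  have rec: "gf rlmin t $ (n + 3) = 2 * gf rlmin t $ (n + 2) + 0 * gf rlmin t $ (n + 1)" for n
    using gf_rlmin_nth_Suc[of "n + 2" t] by (simp add: eval_nat_numeral)
  have coeffs: "gf rlmin t $ 0 = 1" "gf rlmin t $ 1 = t" "gf rlmin t $ 2 = t + t^2"
    using gf_nth_1[of rlmin t] by (simp_all add: gf_nth_0 gf_rlmin_nth_2 stats_Nil stats_singleton)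
  show ?thesis
    by (subst fps_eq_divide_of_recurrence[OF rec])
      (use coeffs in \<open>simp add: algebra_simps
        flip: fps_const_add fps_const_sub fps_const_neg fps_const_mult fps_const_power
          fps_numeral_fps_const\<close>)
qed

lemma gf_lrmin:
  fixes s :: "'a::field"
  shows "gf lrmin s = (1 - fps_const s * fps_X) /
           (1 - 2 * fps_const s * fps_X - fps_const s * fps_X ^ 2 + fps_const (s ^ 2) * fps_X ^ 2)"
proof -
  define G where "G m = (\<Sum>w\<in>Sn_av m. s ^ lrmin (m # map (swap_Suc m) w))" for m
  have A: "gf lrmin s $ Suc m = s * gf lrmin s $ m + G m" if "1 \<le> m" for m
    using that
    by (simp add: G_def gf_nth sum_Sn_av_Suc lrmin_Cons_Suc sum_distrib_left cong: sum.cong)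
  \<comment> \<open>Whether \<open>m # map (swap_Suc m) w\<close> gains a left-to-right minimum depends on the first
    entry of \<open>w\<close>, so the second branch needs a recurrence of its own.\<close>
  have G: "G (Suc m) = s * gf lrmin s $ m + s * G m" if "1 \<le> m" for m
    using that
    by (simp add: G_def gf_nth sum_Sn_av_Suc lrmin_Cons_swap_Suc lrmin_Cons_Suc sum_distrib_left
        Cons_Suc_in_Sn_av_iff Cons_swap_Suc_in_Sn_av_iff cong: sum.cong)
  have rec:
    "gf lrmin s $ (n + 3) = (2 * s) * gf lrmin s $ (n + 2) + (s - s^2) * gf lrmin s $ (n + 1)" for n
    using A[of "n + 2"] A[of "n + 1"] G[of "n + 1"]
    by (simp add: eval_nat_numeral algebra_simps power2_eq_square)
  have "G 1 = s"
    unfolding G_def using lrmin_Cons_swap_Suc[of "[1]" 1] Sn_av_1 by (simp add: stats_singleton)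
  then have coeffs: "gf lrmin s $ 0 = 1" "gf lrmin s $ 1 = s" "gf lrmin s $ 2 = s * s + s"
    using A[of 1] gf_nth_1[of lrmin s]
    by (simp_all add: gf_nth_0 stats_Nil stats_singleton numeral_2_eq_2)
  show ?thesis
    by (subst fps_eq_divide_of_recurrence[OF rec])
      (use coeffs in \<open>simp add: algebra_simps power2_eq_square
        flip: fps_const_add fps_const_sub fps_const_neg fps_const_mult fps_const_power
          fps_numeral_fps_const\<close>)
qed

theorem corollary2:
  fixes u v s t :: "'a::field"
  shows "gf lrmax u = (1 - 2 * fps_X + fps_const u * fps_X - fps_const u * fps_X ^ 2
                         + fps_const (u ^ 2) * fps_X ^ 2) / (1 - 2 * fps_X)
       \<and> gf rlmax v = (1 - fps_X) / (1 - fps_X - fps_const v * fps_X)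
       \<and> gf lrmin s = (1 - fps_const s * fps_X) /
           (1 - 2 * fps_const s * fps_X - fps_const s * fps_X ^ 2 + fps_const (s ^ 2) * fps_X ^ 2)
       \<and> gf rlmin t = (1 - 2 * fps_X + fps_const t * fps_X - fps_const t * fps_X ^ 2
                         + fps_const (t ^ 2) * fps_X ^ 2) / (1 - 2 * fps_X)"
  using gf_lrmax gf_rlmax gf_lrmin gf_rlmin by blast

end
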